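(* Consider instances with two candidates $P,Q$. Let $\mathcal M$ be any deterministic mechanism which selects a winner among $\{P,Q\}$ using only the exact preference strengths of the voters (for each voter $i$: which of $P,Q$ it prefers, and the exact value of its preference strength). Then the worst-case distortion of $\mathcal M$ is at least $\sqrt{2}$; that is, for every $\varepsilon>0$ there is an instance on which the candidate selected by $\mathcal M$ has distortion at least $\sqrt{2}-\varepsilon$.
   Context: Voters $N=\{1,\dots,n\}$ and a finite set of candidates $\mathcal C$ are points of an arbitrary (unknown) metric space $(X,d)$. Voter $i$ prefers candidate $P$ to candidate $Q$ only if $d(i,P)\le d(i,Q)$, and the strength of this preference is $\alpha_i^{PQ}=d(i,Q)/d(i,P)\ge 1$. The social cost of a point $Y\in X$ is $SC(Y)=\sum_{i\in N}d(i,Y)$. If a mechanism selects winner $P_I$ on instance $I=(N,\mathcal C,d)$, the distortion of $P_I$ is $SC(P_I)/\min_{Z\in\mathcal C}SC(Z)$, and the (worst-case) distortion of the mechanism is the supremum of this ratio over all instances. *)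

theory Defs
  imports Complex_Main "HOL-Library.Extended_Real"
begin

definition metric_on :: "nat set \<Rightarrow> (nat \<Rightarrow> nat \<Rightarrow> real) \<Rightarrow> bool" where
  "metric_on S d \<longleftrightarrow>
     (\<forall>x\<in>S. \<forall>y\<in>S. d x y \<ge> 0 \<and> (d x y = 0 \<longleftrightarrow> x = y) \<and> d x y = d y x) \<and>
     (\<forall>x\<in>S. \<forall>y\<in>S. \<forall>z\<in>S. d x z \<le> d x y + d y z)"

text \<open>Preference strength of a voter with distance a to its preferred candidate and
  distance b to the other one: b / a, with b/0 = infinity (and 0/0 read as 1).\<close>
definition pref_strength :: "real \<Rightarrow> real \<Rightarrow> ereal" where
  "pref_strength a b = (if a = b then 1 else if a = 0 then \<infinity> else ereal (b / a))"

definition social_cost :: "nat \<Rightarrow> (nat \<Rightarrow> nat) \<Rightarrow> (nat \<Rightarrow> nat \<Rightarrow> real) \<Rightarrow> nat \<Rightarrow> real" where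
  "social_cost n v d y = (\<Sum>i<n. d (v i) y)"

text \<open>The information given to the mechanism: for each voter i (in order), whether it
  prefers P (True) or Q (False), and the exact strength of its preference.\<close>
definition strength_profile ::
  "nat \<Rightarrow> (nat \<Rightarrow> nat) \<Rightarrow> (nat \<Rightarrow> nat \<Rightarrow> real) \<Rightarrow> nat \<Rightarrow> nat \<Rightarrow> (nat \<Rightarrow> bool) \<Rightarrow> (bool \<times> ereal) list" where
  "strength_profile n v d p q pref =
     map (\<lambda>i. (pref i, if pref i then pref_strength (d (v i) p) (d (v i) q)
                                 else pref_strength (d (v i) q) (d (v i) p))) [0..<n]"

definition consistent_prefs ::
  "nat \<Rightarrow> (nat \<Rightarrow> nat) \<Rightarrow> (nat \<Rightarrow> nat \<Rightarrow> real) \<Rightarrow> nat \<Rightarrow> nat \<Rightarrow> (nat \<Rightarrow> bool) \<Rightarrow> bool" where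
  "consistent_prefs n v d p q pref \<longleftrightarrow>
     (\<forall>i<n. if pref i then d (v i) p \<le> d (v i) q else d (v i) q \<le> d (v i) p)"

end

theory Submission
  imports Defs
begin

text \<open>
  Put P at 0 and Q at 1 on the real line, with one voter preferring P and one preferring Q.
  If the two voters sit at distance \<open>\<surd>2/2\<close> on either side of P, or on either side of Q,
  the two instances report the same preference strengths, because
  \<open>(1 + \<surd>2/2)/(\<surd>2/2) = (\<surd>2/2)/(1 - \<surd>2/2)\<close>. Both social costs are \<open>\<surd>2\<close> at the
  candidate the voters surround and 2 at the other one, so whichever candidate a
  deterministic mechanism picks on this profile has distortion \<open>\<surd>2\<close> in one of the instances.
\<close>

lemma metric_on_abs_diff:
  fixes f :: "nat \<Rightarrow> real"
  assumes "inj_on f S"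
  shows "metric_on S (\<lambda>x y. \<bar>f x - f y\<bar>)"
  using assms unfolding metric_on_def inj_on_def by auto

lemma sqrt_2_bounds: "1.4 < sqrt (2::real)" "sqrt (2::real) < 1.5"
proof -
  have "sqrt (1.4^2) < sqrt (2::real)"
    by (rule real_sqrt_less_mono) (simp add: power2_eq_square)
  then show "1.4 < sqrt (2::real)"
    by simp
  have "sqrt (2::real) < sqrt (1.5^2)"
    by (rule real_sqrt_less_mono) (simp add: power2_eq_square)
  then show "sqrt (2::real) < 1.5"
    by simp
qed

text \<open>Points 0 and 1 are the candidates, points 2 and 3 the voters placed around \<open>c\<close>.\<close>
definition around :: "real \<Rightarrow> nat \<Rightarrow> real" where
  "around c k = (if k = 0 then 0 else if k = 1 then 1
                 else if k = 2 then c - sqrt 2 / 2 else c + sqrt 2 / 2)"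

definition around_dist :: "real \<Rightarrow> nat \<Rightarrow> nat \<Rightarrow> real" where
  "around_dist c x y = \<bar>around c x - around c y\<bar>"

abbreviation voters :: "nat \<Rightarrow> nat" where
  "voters i \<equiv> i + 2"

abbreviation prefers_P :: "nat \<Rightarrow> bool" where
  "prefers_P i \<equiv> i = 0"

abbreviation around_profile :: "real \<Rightarrow> (bool \<times> ereal) list" where
  "around_profile c \<equiv> strength_profile 2 voters (around_dist c) 0 1 prefers_P"

abbreviation around_distortion :: "real \<Rightarrow> nat \<Rightarrow> real" where
  "around_distortion c w \<equiv> social_cost 2 voters (around_dist c) w
     / min (social_cost 2 voters (around_dist c) 0) (social_cost 2 voters (around_dist c) 1)"

lemma metric_on_around_dist:
  assumes "c \<in> {0, 1}"
  shows "metric_on (insert 0 (insert 1 (voters ` {..<2}))) (around_dist c)"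
proof -
  have points: "insert 0 (insert 1 (voters ` {..<2})) = {0, 1, 2, 3::nat}"
    by (auto simp: image_def lessThan_def)
  have "inj_on (around c) {0, 1, 2, 3}"
    using assms sqrt_2_bounds unfolding inj_on_def around_def by (auto simp: field_simps)
  then show ?thesis
    unfolding points around_dist_def by (rule metric_on_abs_diff)
qed

lemma consistent_prefs_around:
  assumes "c \<in> {0, 1}"
  shows "consistent_prefs 2 voters (around_dist c) 0 1 prefers_P"
  using assms sqrt_2_bounds
  unfolding consistent_prefs_def around_dist_def around_def
  by (auto simp: less_2_cases_iff abs_if)

lemma social_cost_around:
  "social_cost 2 voters (around_dist 0) 0 = sqrt 2"
  "social_cost 2 voters (around_dist 0) 1 = 2"
  "social_cost 2 voters (around_dist 1) 0 = 2"
  "social_cost 2 voters (around_dist 1) 1 = sqrt 2"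
  using sqrt_2_bounds
  unfolding social_cost_def around_dist_def around_def
  by (simp_all add: numeral_2_eq_2 abs_if)

lemma around_distortion_other_candidate:
  "around_distortion 0 1 = sqrt 2" "around_distortion 1 0 = sqrt 2"
proof -
  have "2 / sqrt 2 = sqrt (2::real)" and "sqrt (2::real) \<le> 2"
    using sqrt_2_bounds by (simp_all add: field_simps)
  then show "around_distortion 0 1 = sqrt 2" "around_distortion 1 0 = sqrt 2"
    unfolding social_cost_around by (simp_all add: min_absorb1 min_absorb2)
qed

lemma around_profile_eq: "around_profile 0 = around_profile 1"
proof -
  let ?s = "sqrt (2::real)"
  have "(1 + ?s/2) / (?s/2) = (?s/2) / (1 - ?s/2)"
    using sqrt_2_bounds by (simp add: field_simps)
  then show ?thesis
    using sqrt_2_bounds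
    unfolding strength_profile_def pref_strength_def around_dist_def around_def
    by (simp add: upt_rec numeral_2_eq_2 abs_if)
qed

theorem mainTheorem1:
  fixes M :: "(bool \<times> ereal) list \<Rightarrow> bool"
    and \<epsilon> :: real
  assumes "\<epsilon> > 0"
  shows "\<exists>(n::nat) (d::nat \<Rightarrow> nat \<Rightarrow> real) (v::nat \<Rightarrow> nat) (p::nat) (q::nat) (pref::nat \<Rightarrow> bool).
           n \<ge> 1 \<and> p \<noteq> q \<and>
           metric_on (insert p (insert q (v ` {..<n}))) d \<and>
           consistent_prefs n v d p q pref \<and>
           (let w = (if M (strength_profile n v d p q pref) then p else q)
            in social_cost n v d w / min (social_cost n v d p) (social_cost n v d q)
                 \<ge> sqrt 2 - \<epsilon>)"
proof -
  have "\<exists>c\<in>{0, 1}. around_distortion c (if M (around_profile c) then 0 else 1) = sqrt 2"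
  proof (cases "M (around_profile 0)")
    case True
    then have "M (around_profile 1)"
      by (simp only: around_profile_eq)
    then show ?thesis
      using around_distortion_other_candidate(2) by auto
  next
    case False
    then show ?thesis
      using around_distortion_other_candidate(1) by auto
  qed
  then obtain c :: real where "c \<in> {0, 1}"
    and distortion: "around_distortion c (if M (around_profile c) then 0 else 1) = sqrt 2" ..
  show ?thesis
  proof (intro exI conjI)
    show "metric_on (insert 0 (insert 1 (voters ` {..<2}))) (around_dist c)"
      using \<open>c \<in> {0, 1}\<close> by (rule metric_on_around_dist)
    show "consistent_prefs 2 voters (around_dist c) 0 1 prefers_P"
      using \<open>c \<in> {0, 1}\<close> by (rule consistent_prefs_around)
    show "let w = if M (around_profile c) then 0 else 1 in sqrt 2 - \<epsilon> \<le> around_distortion c w"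
      using distortion assms by (simp only: Let_def)
  qed simp_all
qed

end
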